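(* Assume the standing hypotheses and definitions in the context. Then $H(t,G(t,y))=y$ for all $t\in\mathbb{R}$ and $y\in\mathbb{R}^n$.
   Context: Standing hypotheses: $A:\mathbb{R}\to\mathbb{R}^{n\times n}$ is continuous and bounded, $T(t,s)$ is the evolution operator of $x'=A(t)x$. $\mu:\mathbb{R}\to(0,\infty)$ is an increasing differentiable growth rate: $\mu(0)=1$, $\lim_{t\to-\infty}\mu(t)=0$, $\lim_{t\to+\infty}\mu(t)=+\infty$. The system $x'=A(t)x$ admits an algebraic dichotomy: projections $P(s)$, $Q(s)=I-P(s)$, constants $K,\alpha>0$ with $T(t,s)P(s)=P(t)T(t,s)$, $\|T(t,s)P(s)\|\le K(\mu(t)/\mu(s))^{-\alpha}$ ($t\ge s$), $\|T(t,s)Q(s)\|\le K(\mu(s)/\mu(t))^{-\alpha}$ ($t\le s$). $f:\mathbb{R}\times\mathbb{R}^n\to\mathbb{R}^n$ is continuous, $\|f(t,x)\|\le\beta\mu'(t)\mu^{-1}(t)$, $\|f(t,x_1)-f(t,x_2)\|\le\gamma\mu'(t)\mu^{-1}(t)\|x_1-x_2\|$ for constants $\beta,\gamma\ge0$, and $6K\gamma\alpha^{-1}<1$. $X(t,\tau,\xi)$ (resp. $Y(t,\tau,\xi)$) is the solution of $x'=A(t)x+f(t,x)$ (resp. $x'=A(t)x$) with value $\xi$ at $t=\tau$. $h(t,(\tau,\xi))$ is the unique solution bounded on $\mathbb{R}$ of $Z'=A(t)Z-f(t,X(t,\tau,\xi))$, and $g(t,(\tau,\xi))$ the unique solution bounded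 on $\mathbb{R}$ of $Z'=A(t)Z+f(t,Y(t,\tau,\xi)+Z)$ (both exist and are unique under these hypotheses). Define $H(t,x)=x+h(t,(t,x))$ and $G(t,y)=y+g(t,(t,y))$. *)

theory Defs
  imports "HOL-Analysis.Analysis"
begin

definition opnorm :: "real^'n^'m \<Rightarrow> real" where
  "opnorm M = onorm (\<lambda>x. M *v x)"

definition hsol :: "(real \<Rightarrow> real^'n^'n) \<Rightarrow> (real \<Rightarrow> real^'n \<Rightarrow> real^'n)
    \<Rightarrow> (real \<Rightarrow> real \<Rightarrow> real^'n \<Rightarrow> real^'n) \<Rightarrow> real \<Rightarrow> (real \<times> (real^'n)) \<Rightarrow> real^'n" where
  "hsol A f X t p =
     (THE z. bounded (range z) \<and>
        (\<forall>s. (z has_vector_derivative (A s *v z s - f s (X s (fst p) (snd p)))) (at s))) t"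

definition gsol :: "(real \<Rightarrow> real^'n^'n) \<Rightarrow> (real \<Rightarrow> real^'n \<Rightarrow> real^'n)
    \<Rightarrow> (real \<Rightarrow> real \<Rightarrow> real^'n \<Rightarrow> real^'n) \<Rightarrow> real \<Rightarrow> (real \<times> (real^'n)) \<Rightarrow> real^'n" where
  "gsol A f Y t p =
     (THE z. bounded (range z) \<and>
        (\<forall>s. (z has_vector_derivative (A s *v z s + f s (Y s (fst p) (snd p) + z s))) (at s))) t"

definition Hmap :: "(real \<Rightarrow> real^'n^'n) \<Rightarrow> (real \<Rightarrow> real^'n \<Rightarrow> real^'n)
    \<Rightarrow> (real \<Rightarrow> real \<Rightarrow> real^'n \<Rightarrow> real^'n) \<Rightarrow> real \<Rightarrow> real^'n \<Rightarrow> real^'n" where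
  "Hmap A f X t x = x + hsol A f X t (t, x)"

definition Gmap :: "(real \<Rightarrow> real^'n^'n) \<Rightarrow> (real \<Rightarrow> real^'n \<Rightarrow> real^'n)
    \<Rightarrow> (real \<Rightarrow> real \<Rightarrow> real^'n \<Rightarrow> real^'n) \<Rightarrow> real \<Rightarrow> real^'n \<Rightarrow> real^'n" where
  "Gmap A f Y t y = y + gsol A f Y t (t, y)"

end

theory Submission
  imports Defs
begin

text \<open>
  Put \<open>x = G(t, y) = y + g(t)\<close>, where \<open>g\<close> is the bounded solution of
  \<open>z' = A z + f(s, Y(s, t, y) + z)\<close>. Then \<open>s \<mapsto> Y(s, t, y) + g(s)\<close> solves the perturbed equation
  and equals \<open>x\<close> at \<open>s = t\<close>, so by uniqueness of solutions (a Gronwall argument) it is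
  \<open>X(s, t, x)\<close>. Hence \<open>-g\<close> is a bounded solution of \<open>Z' = A Z - f(s, X(s, t, x))\<close>. Such bounded
  solutions are unique because the dichotomy leaves no nonzero bounded solution of \<open>x' = A x\<close>; so
  \<open>h(t, (t, x)) = -g(t)\<close> and \<open>H(t, x) = y\<close>.

  The analytic work is the existence of \<open>g\<close>, which the definition via \<open>THE\<close> presupposes: the
  Green operator of the dichotomy turns the equation for \<open>g\<close> into a fixed point problem for a
  contraction with constant \<open>2 K \<gamma> / \<alpha> < 1\<close> on bounded continuous functions.
\<close>

lemma bounded_bilinear_matrix_vector_mult:
  "bounded_bilinear ((*v) :: real^'n^'m \<Rightarrow> real^'n \<Rightarrow> real^'m)"
  unfolding bilinear_conv_bounded_bilinear[symmetric] bilinear_def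
  by (auto intro!: linearI simp: vec_eq_iff matrix_vector_mult_def sum_distrib_left sum.distrib algebra_simps)

lemma bounded_bilinear_matrix_matrix_mult:
  "bounded_bilinear ((**) :: real^'n^'m \<Rightarrow> real^'k^'n \<Rightarrow> real^'k^'m)"
  unfolding bilinear_conv_bounded_bilinear[symmetric] bilinear_def
  by (auto intro!: linearI simp: vec_eq_iff matrix_matrix_mult_def sum_distrib_left sum.distrib algebra_simps)

lemma norm_matrix_vector_mult_le_opnorm: "norm (M *v x) \<le> opnorm M * norm x"
  unfolding opnorm_def by (rule onorm[OF matrix_vector_mul_bounded_linear])

lemma opnorm_nonneg: "opnorm M \<ge> 0"
  unfolding opnorm_def by (rule onorm_pos_le[OF matrix_vector_mul_bounded_linear])

lemma norm_matrix_vector_mult_le: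
  assumes "opnorm M \<le> a" and "norm x \<le> b"
  shows "norm (M *v x) \<le> a * b"
  using norm_matrix_vector_mult_le_opnorm[of M x]
    mult_mono[OF assms order_trans[OF opnorm_nonneg assms(1)] norm_ge_zero] by linarith

lemma tendsto_mat_1_left_inverse:
  fixes E N :: "'a \<Rightarrow> real^'n^'n"
  assumes E: "(E \<longlongrightarrow> mat 1) F" and inverse: "\<forall>\<^sub>F x in F. N x ** E x = mat 1"
  shows "(N \<longlongrightarrow> mat 1) F"
proof -
  let ?I = "mat 1 :: real^'n^'n"
  obtain C where C: "C > 0" "\<And>a b. norm ((a :: real^'n^'n) ** (b :: real^'n^'n)) \<le> norm a * norm b * C"
    using bounded_bilinear.pos_bounded[OF bounded_bilinear_matrix_matrix_mult] by blast
  have E_small: "\<forall>\<^sub>F x in F. norm (E x - ?I) * C \<le> 1/2"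
  proof -
    have "\<forall>\<^sub>F x in F. norm (E x - ?I) < 1 / (2 * C)"
      using E C(1) by (simp add: tendsto_iff dist_norm)
    then show ?thesis
      by eventually_elim (use C(1) in \<open>simp add: field_simps\<close>)
  qed
  have "\<forall>\<^sub>F x in F. norm (N x - ?I) \<le> 2 * norm ?I * norm (E x - ?I) * C"
    using E_small inverse
  proof eventually_elim
    case (elim x)
    have "N x ** (?I - E x) = N x ** ?I - N x ** E x"
      by (rule bounded_bilinear.diff_right[OF bounded_bilinear_matrix_matrix_mult])
    then have "N x - ?I = N x ** (?I - E x)"
      using elim(2) by simp
    then have NI: "norm (N x - ?I) \<le> norm (N x) * norm (E x - ?I) * C"
      using C(2)[of "N x" "?I - E x"] by (simp only: norm_minus_commute[of ?I "E x"])
    also have "\<dots> \<le> norm (N x) / 2"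
      using mult_left_mono[OF elim(1) norm_ge_zero[of "N x"]] by (simp only: mult.assoc)
    finally have "norm (N x) \<le> 2 * norm ?I"
      using norm_triangle_sub[of "N x" ?I] by linarith
    then have "norm (N x) * norm (E x - ?I) * C \<le> 2 * norm ?I * norm (E x - ?I) * C"
      using C(1) by (intro mult_right_mono) auto
    with NI show ?case
      by (rule order_trans)
  qed
  moreover have "((\<lambda>x. 2 * norm ?I * norm (E x - ?I) * C) \<longlongrightarrow> 0) F"
    using E by (intro tendsto_mult_left_zero tendsto_mult_right_zero tendsto_norm_zero) (simp add: LIM_zero_iff)
  ultimately have "((\<lambda>x. N x - ?I) \<longlongrightarrow> 0) F"
    by (rule Lim_null_comparison)
  then show ?thesis by (simp add: LIM_zero_iff)
qed

section \<open>Uniqueness of solutions by Gronwall's argument\<close>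

lemma Gronwall_eq_0:
  fixes \<phi> \<Lambda> :: "real \<Rightarrow> real"
  assumes \<phi>: "\<And>s. (\<phi> has_real_derivative \<phi>' s) (at s)"
    and \<Lambda>: "\<And>s. (\<Lambda> has_real_derivative L s) (at s)"
    and bound: "\<And>s. \<bar>\<phi>' s\<bar> \<le> L s * \<phi> s"
    and nonneg: "\<And>s. \<phi> s \<ge> 0" and zero: "\<phi> t\<^sub>0 = 0"
  shows "\<phi> s = 0"
proof (cases "t\<^sub>0 \<le> s")
  case True
  have "\<phi> s * exp (- \<Lambda> s) \<le> \<phi> t\<^sub>0 * exp (- \<Lambda> t\<^sub>0)"
  proof (rule DERIV_nonpos_imp_nonincreasing[OF True])
    fix x
    have "((\<lambda>s. \<phi> s * exp (- \<Lambda> s)) has_real_derivative exp (- \<Lambda> x) * (\<phi>' x - L x * \<phi> x)) (at x)"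
      by (auto intro!: derivative_eq_intros \<phi> \<Lambda> simp: algebra_simps)
    moreover have "exp (- \<Lambda> x) * (\<phi>' x - L x * \<phi> x) \<le> 0"
      using bound[of x] by (intro mult_nonneg_nonpos) auto
    ultimately show "\<exists>y. ((\<lambda>s. \<phi> s * exp (- \<Lambda> s)) has_real_derivative y) (at x) \<and> y \<le> 0"
      by blast
  qed
  with zero nonneg[of s] show ?thesis
    by (simp add: mult_le_0_iff)
next
  case False
  have "\<phi> s * exp (\<Lambda> s) \<le> \<phi> t\<^sub>0 * exp (\<Lambda> t\<^sub>0)"
  proof (rule DERIV_nonneg_imp_nondecreasing[of s t\<^sub>0])
    show "s \<le> t\<^sub>0" using False by simp
    fix x
    have "((\<lambda>s. \<phi> s * exp (\<Lambda> s)) has_real_derivative exp (\<Lambda> x) * (\<phi>' x + L x * \<phi> x)) (at x)"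
      by (auto intro!: derivative_eq_intros \<phi> \<Lambda> simp: algebra_simps)
    moreover have "exp (\<Lambda> x) * (\<phi>' x + L x * \<phi> x) \<ge> 0"
      using bound[of x] by (intro mult_nonneg_nonneg) auto
    ultimately show "\<exists>y. ((\<lambda>s. \<phi> s * exp (\<Lambda> s)) has_real_derivative y) (at x) \<and> y \<ge> 0"
      by blast
  qed
  with zero nonneg[of s] show ?thesis
    by (simp add: mult_le_0_iff)
qed

lemma Gronwall_uniqueness:
  fixes u v :: "real \<Rightarrow> 'a::real_inner"
  assumes u: "\<And>s. (u has_vector_derivative u' s) (at s)"
    and v: "\<And>s. (v has_vector_derivative v' s) (at s)"
    and \<Lambda>: "\<And>s. (\<Lambda> has_real_derivative L s) (at s)"
    and Lipschitz: "\<And>s. norm (u' s - v' s) \<le> L s * norm (u s - v s)"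
    and initial: "u t\<^sub>0 = v t\<^sub>0"
  shows "u s = v s"
proof -
  define d d' where "d s = u s - v s" and "d' s = u' s - v' s" for s
  have d: "(d has_vector_derivative d' s) (at s)" for s
    unfolding d_def d'_def by (intro derivative_intros u v)
  have "(\<lambda>s. d s \<bullet> d s) s = 0"
  proof (rule Gronwall_eq_0[where \<phi>="\<lambda>s. d s \<bullet> d s" and \<Lambda>="\<lambda>s. 2 * \<Lambda> s"
        and L="\<lambda>s. 2 * L s" and \<phi>'="\<lambda>s. 2 * (d s \<bullet> d' s)"])
    show "((\<lambda>s. d s \<bullet> d s) has_real_derivative 2 * (d s \<bullet> d' s)) (at s)" for s
      using bounded_bilinear.has_vector_derivative[OF bounded_bilinear_inner d d]
      by (simp add: has_real_derivative_iff_has_vector_derivative inner_commute)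
    show "((\<lambda>s. 2 * \<Lambda> s) has_real_derivative 2 * L s) (at s)" for s
      by (rule DERIV_cmult[OF \<Lambda>])
    show "\<bar>2 * (d s \<bullet> d' s)\<bar> \<le> 2 * L s * (d s \<bullet> d s)" for s
    proof -
      have "\<bar>d s \<bullet> d' s\<bar> \<le> norm (d s) * norm (d' s)"
        by (rule Cauchy_Schwarz_ineq2)
      also have "\<dots> \<le> norm (d s) * (L s * norm (d s))"
        using Lipschitz[of s] unfolding d_def d'_def by (intro mult_left_mono) auto
      finally show ?thesis
        by (simp add: power2_norm_eq_inner[symmetric] power2_eq_square algebra_simps)
    qed
  qed (use initial in \<open>auto simp: d_def\<close>)
  then show ?thesis by (simp add: d_def)
qed

section \<open>Improper integrals\<close>

lemma nonneg_integrable_on_incseq_Union: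
  fixes G :: "'a::euclidean_space \<Rightarrow> real" and I :: "nat \<Rightarrow> 'a set"
  assumes I: "incseq I"
    and nonneg: "\<And>x. x \<in> (\<Union>k. I k) \<Longrightarrow> 0 \<le> G x"
    and integrable: "\<And>k. G integrable_on I k"
    and bound: "\<And>k. integral (I k) G \<le> B"
  shows "G integrable_on (\<Union>k. I k)" and "integral (\<Union>k. I k) G \<le> B"
proof -
  let ?S = "\<Union>k. I k"
  define G\<^sub>k where "G\<^sub>k k x = (if x \<in> I k then G x else 0)" for k x
  have G\<^sub>k: "(G\<^sub>k k has_integral integral (I k) G) ?S" for k
  proof -
    have "I k \<inter> ?S = I k" by blast
    then show ?thesis
      unfolding G\<^sub>k_def has_integral_restrict_Int using integrable by (simp add: integrable_integral)
  qed
  have G\<^sub>k_nonneg: "0 \<le> G\<^sub>k k x" if "x \<in> ?S" for k x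
    using nonneg[OF that] by (simp add: G\<^sub>k_def)
  have integral_G\<^sub>k: "integral ?S (G\<^sub>k k) = integral (I k) G" for k
    using G\<^sub>k by (rule integral_unique)
  have "G integrable_on ?S \<and> ((\<lambda>k. integral ?S (G\<^sub>k k)) \<longlongrightarrow> integral ?S G) sequentially"
  proof (rule monotone_convergence_increasing)
    show "G\<^sub>k k integrable_on ?S" for k
      using G\<^sub>k by blast
    show "G\<^sub>k k x \<le> G\<^sub>k (Suc k) x" if "x \<in> ?S" for k x
      using nonneg[OF that] incseq_SucD[OF I, of k] unfolding G\<^sub>k_def by auto
    show "(\<lambda>k. G\<^sub>k k x) \<longlonglongrightarrow> G x" if x: "x \<in> ?S" for x
    proof (rule tendsto_eventually)
      obtain k\<^sub>0 where k\<^sub>0: "x \<in> I k\<^sub>0" using x by blast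
      show "\<forall>\<^sub>F k in sequentially. G\<^sub>k k x = G x"
      proof (rule eventually_sequentiallyI)
        fix k assume "k\<^sub>0 \<le> k"
        with k\<^sub>0 have "x \<in> I k" using monoD[OF I] by blast
        then show "G\<^sub>k k x = G x" by (simp add: G\<^sub>k_def)
      qed
    qed
    have "\<bar>integral ?S (G\<^sub>k k)\<bar> \<le> B" for k
      using has_integral_nonneg[OF G\<^sub>k G\<^sub>k_nonneg] bound[of k] integral_G\<^sub>k[of k] by simp
    then show "bounded (range (\<lambda>k. integral ?S (G\<^sub>k k)))"
      by (intro boundedI) auto
  qed
  then show "G integrable_on ?S"
    and "integral ?S G \<le> B"
    using LIMSEQ_le_const2[of "\<lambda>k. integral (I k) G"] bound by (auto simp: integral_G\<^sub>k)
qed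

lemma nonneg_integrable_on_Iic_bounded_primitive:
  fixes g \<Gamma> :: "real \<Rightarrow> real"
  assumes primitive: "\<And>r. r \<le> s \<Longrightarrow> (\<Gamma> has_real_derivative g r) (at r)"
    and nonneg: "\<And>r. r \<le> s \<Longrightarrow> 0 \<le> g r"
    and lower: "\<And>r. r \<le> s \<Longrightarrow> L \<le> \<Gamma> r"
  shows "g integrable_on {..s}" and "integral {..s} g \<le> \<Gamma> s - L"
proof -
  have Union: "(\<Union>k. {s - real k..s}) = {..s}"
  proof (intro equalityI subsetI)
    fix r assume "r \<in> {..s}"
    moreover obtain k where "s - r \<le> real k" using real_arch_simple by blast
    ultimately have "r \<in> {s - real k..s}" by simp
    then show "r \<in> (\<Union>k. {s - real k..s})" by blast
  qed auto
  have FTC: "(g has_integral \<Gamma> s - \<Gamma> (s - real k)) {s - real k..s}" for k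
    using primitive
    by (intro fundamental_theorem_of_calculus)
       (auto simp: has_real_derivative_iff_has_vector_derivative[symmetric] intro: has_field_derivative_at_within)
  have incseq: "incseq (\<lambda>k. {s - real k..s})"
    by (rule monoI) auto
  have nonneg_Union: "0 \<le> g x" if "x \<in> (\<Union>k. {s - real k..s})" for x
    using that nonneg by auto
  have integrable: "g integrable_on {s - real k..s}" and bound: "integral {s - real k..s} g \<le> \<Gamma> s - L" for k
    using FTC[of k] integral_unique[OF FTC[of k]] lower[of "s - real k"] by auto
  show "g integrable_on {..s}" and "integral {..s} g \<le> \<Gamma> s - L"
    using nonneg_integrable_on_incseq_Union[OF incseq nonneg_Union integrable bound] by (simp_all only: Union)
qed

lemma nonneg_integrable_on_Ici_bounded_primitive:
  fixes g \<Gamma> :: "real \<Rightarrow> real"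
  assumes primitive: "\<And>r. s \<le> r \<Longrightarrow> (\<Gamma> has_real_derivative g r) (at r)"
    and nonneg: "\<And>r. s \<le> r \<Longrightarrow> 0 \<le> g r"
    and upper: "\<And>r. s \<le> r \<Longrightarrow> \<Gamma> r \<le> U"
  shows "g integrable_on {s..}" and "integral {s..} g \<le> U - \<Gamma> s"
proof -
  have Union: "(\<Union>k. {s..s + real k}) = {s..}"
  proof (intro equalityI subsetI)
    fix r assume "r \<in> {s..}"
    moreover obtain k where "r - s \<le> real k" using real_arch_simple by blast
    ultimately have "r \<in> {s..s + real k}" by simp
    then show "r \<in> (\<Union>k. {s..s + real k})" by blast
  qed auto
  have FTC: "(g has_integral \<Gamma> (s + real k) - \<Gamma> s) {s..s + real k}" for k
    using primitive
    by (intro fundamental_theorem_of_calculus)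
       (auto simp: has_real_derivative_iff_has_vector_derivative[symmetric] intro: has_field_derivative_at_within)
  have incseq: "incseq (\<lambda>k. {s..s + real k})"
    by (rule monoI) auto
  have nonneg_Union: "0 \<le> g x" if "x \<in> (\<Union>k. {s..s + real k})" for x
    using that nonneg by auto
  have integrable: "g integrable_on {s..s + real k}" and bound: "integral {s..s + real k} g \<le> U - \<Gamma> s" for k
    using FTC[of k] integral_unique[OF FTC[of k]] upper[of "s + real k"] by auto
  show "g integrable_on {s..}" and "integral {s..} g \<le> U - \<Gamma> s"
    using nonneg_integrable_on_incseq_Union[OF incseq nonneg_Union integrable bound] by (simp_all only: Union)
qed

lemma continuous_dominated_integrable:
  fixes k :: "'a::euclidean_space \<Rightarrow> 'b::euclidean_space"
  assumes k: "continuous_on S k" and S: "S \<in> sets lebesgue"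
    and w: "w integrable_on S" and dominated: "\<And>r. r \<in> S \<Longrightarrow> norm (k r) \<le> w r"
  shows "k integrable_on S" and "norm (integral S k) \<le> integral S w"
proof -
  show "k integrable_on S"
    using measurable_bounded_by_integrable_imp_integrable
      [OF continuous_imp_measurable_on_sets_lebesgue[OF k S] w dominated S] .
  then show "norm (integral S k) \<le> integral S w"
    using w dominated by (rule integral_norm_bound_integral)
qed

lemma integral_Iic_has_vector_derivative:
  fixes p :: "real \<Rightarrow> 'a::banach"
  assumes p: "continuous_on UNIV p" and integrable: "\<And>s. p integrable_on {..s}"
  shows "((\<lambda>s. integral {..s} p) has_vector_derivative p t) (at t)"
proof -
  let ?a = "t - 1"
  have split: "integral {..s} p = integral {..?a} p + integral {?a..s} p" if "?a < s" for s
  proof -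
    have "(p has_integral integral {..?a} p + integral {?a..s} p) ({..?a} \<union> {?a..s})"
    proof (rule has_integral_Un)
      show "(p has_integral integral {?a..s} p) {?a..s}"
        using integrable_continuous_real[OF continuous_on_subset[OF p]] by blast
      have "{..?a} \<inter> {?a..s} = {?a}" using that by auto
      then show "negligible ({..?a} \<inter> {?a..s})" by simp
    qed (use integrable in blast)
    moreover have "{..?a} \<union> {?a..s} = {..s}" using that by auto
    ultimately show ?thesis by (simp add: integral_unique)
  qed
  have "((\<lambda>s. integral {?a..s} p) has_vector_derivative p t) (at t within {?a..t + 1})"
    by (rule integral_has_vector_derivative[OF continuous_on_subset[OF p]]) auto
  then have "((\<lambda>s. integral {?a..s} p) has_vector_derivative p t) (at t)"
    by (simp add: at_within_Icc_at)
  then have "((\<lambda>s. integral {..?a} p + integral {?a..s} p) has_vector_derivative p t) (at t)"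
    using has_vector_derivative_add[OF has_vector_derivative_const] by fastforce
  then show ?thesis
    by (rule has_vector_derivative_transform_within_open[where S="{?a<..}"]) (auto simp: split)
qed

lemma integral_Ici_has_vector_derivative:
  fixes q :: "real \<Rightarrow> 'a::banach"
  assumes q: "continuous_on UNIV q" and integrable: "\<And>s. q integrable_on {s..}"
  shows "((\<lambda>s. integral {s..} q) has_vector_derivative - q t) (at t)"
proof -
  let ?a = "t - 1"
  have split: "integral {s..} q = integral {?a..} q - integral {?a..s} q" if "?a < s" for s
  proof -
    have "(q has_integral integral {?a..s} q + integral {s..} q) ({?a..s} \<union> {s..})"
    proof (rule has_integral_Un)
      show "(q has_integral integral {?a..s} q) {?a..s}"
        using integrable_continuous_real[OF continuous_on_subset[OF q]] by blast
      show "(q has_integral integral {s..} q) {s..}"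
        using integrable by blast
      have "{?a..s} \<inter> {s..} = {s}" using that by auto
      then show "negligible ({?a..s} \<inter> {s..})" by simp
    qed
    moreover have "{?a..s} \<union> {s..} = {?a..}" using that by auto
    ultimately show ?thesis by (simp add: integral_unique)
  qed
  have "((\<lambda>s. integral {?a..s} q) has_vector_derivative q t) (at t within {?a..t + 1})"
    by (rule integral_has_vector_derivative[OF continuous_on_subset[OF q]]) auto
  then have "((\<lambda>s. integral {?a..s} q) has_vector_derivative q t) (at t)"
    by (simp add: at_within_Icc_at)
  then have "((\<lambda>s. integral {?a..} q - integral {?a..s} q) has_vector_derivative - q t) (at t)"
    using has_vector_derivative_diff[OF has_vector_derivative_const] by fastforce
  then show ?thesis
    by (rule has_vector_derivative_transform_within_open[where S="{?a<..}"]) (auto simp: split)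
qed

section \<open>Linear systems with an algebraic dichotomy\<close>

lemma eq_0_if_eventually_norm_le:
  fixes v :: "'a::real_normed_vector"
  assumes "F \<noteq> bot" and "(h \<longlongrightarrow> 0) F" and "\<forall>\<^sub>F r in F. norm v \<le> h r"
  shows "v = 0"
  using tendsto_le[OF assms(1,2) tendsto_const assms(3)] by simp

locale algebraic_dichotomy =
  fixes A :: "real \<Rightarrow> real^'n^'n"
    and T :: "real \<Rightarrow> real \<Rightarrow> real^'n^'n"
    and \<mu> :: "real \<Rightarrow> real"
    and P :: "real \<Rightarrow> real^'n^'n"
    and K \<alpha> :: real
  assumes A_bounded: "bounded (range A)"
    and T_self: "\<And>s. T s s = mat 1"
    and T_deriv: "\<And>t s. ((\<lambda>r. T r s) has_vector_derivative (A t ** T t s)) (at t)"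
    and mu_pos: "\<And>t. \<mu> t > 0"
    and mu_mono: "mono \<mu>"
    and mu_differentiable: "\<And>t. \<mu> differentiable (at t)"
    and mu_at_bot: "(\<mu> \<longlongrightarrow> 0) at_bot"
    and mu_at_top: "filterlim \<mu> at_top at_top"
    and alpha_pos: "\<alpha> > 0"
    and P_commute: "\<And>t s. T t s ** P s = P t ** T t s"
    and stable_bound: "\<And>t s. t \<ge> s \<Longrightarrow> opnorm (T t s ** P s) \<le> K * (\<mu> t / \<mu> s) powr (-\<alpha>)"
    and unstable_bound: "\<And>t s. t \<le> s \<Longrightarrow> opnorm (T t s ** (mat 1 - P s)) \<le> K * (\<mu> s / \<mu> t) powr (-\<alpha>)"
begin

lemma mu_has_derivative: "(\<mu> has_real_derivative deriv \<mu> t) (at t)"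
  using mu_differentiable DERIV_deriv_iff_real_differentiable by blast

lemma deriv_mu_nonneg: "deriv \<mu> t \<ge> 0"
  by (rule mono_on_imp_deriv_nonneg[OF mono_imp_mono_on[OF mu_mono, of UNIV] mu_has_derivative]) simp

lemma log_derivative_nonneg: "deriv \<mu> t / \<mu> t \<ge> 0"
  using deriv_mu_nonneg[of t] mu_pos[of t] by simp

lemma A_bound: obtains M where "\<And>t x. norm (A t *v x) \<le> M * norm x"
proof -
  obtain B where B: "\<And>t. norm (A t) \<le> B"
    using A_bounded by (auto simp: bounded_iff)
  obtain C where C: "C > 0" "\<And>M x. norm ((M :: real^'n^'n) *v x) \<le> norm M * norm x * C"
    using bounded_bilinear.pos_bounded[OF bounded_bilinear_matrix_vector_mult] by blast
  have "norm (A t *v x) \<le> B * C * norm x" for t x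
  proof -
    have "norm (A t *v x) \<le> norm (A t) * (norm x * C)"
      using C(2) by (simp add: mult.assoc)
    also have "\<dots> \<le> B * (norm x * C)"
      using B[of t] C(1) by (intro mult_right_mono) auto
    finally show ?thesis by (simp add: mult_ac)
  qed
  then show ?thesis by (rule that)
qed

lemma evolution_has_vector_derivative:
  "((\<lambda>s. T s r *v w) has_vector_derivative A s *v (T s r *v w)) (at s)"
  using bounded_bilinear.has_vector_derivative
    [OF bounded_bilinear_matrix_vector_mult T_deriv[where t=s and s=r] has_vector_derivative_const[of w]]
  by (simp add: matrix_vector_mul_assoc)

lemma linear_solution_eq_evolution:
  assumes x: "\<And>s. (x has_vector_derivative A s *v x s) (at s)"
  shows "x s = T s r *v x r"
proof -
  obtain M where M: "\<And>t v. norm (A t *v v) \<le> M * norm v"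
    using A_bound by blast
  show ?thesis
  proof (rule Gronwall_uniqueness[where u=x and v="\<lambda>s. T s r *v x r" and t\<^sub>0=r
        and u'="\<lambda>s. A s *v x s" and v'="\<lambda>s. A s *v (T s r *v x r)" and \<Lambda>="\<lambda>s. M * s" and L="\<lambda>_. M"])
    show "((\<lambda>s. M * s) has_real_derivative M) (at s)" for s
      by (auto intro!: derivative_eq_intros)
    show "norm (A s *v x s - A s *v (T s r *v x r)) \<le> M * norm (x s - T s r *v x r)" for s
      using M[of s "x s - T s r *v x r"] by (simp add: matrix_vector_mult_diff_distrib)
  qed (auto simp: x evolution_has_vector_derivative T_self)
qed

lemma T_compose: "T s r ** T r u = T s u"
proof -
  have "T s u *v w = T s r *v (T r u *v w)" for w
    using linear_solution_eq_evolution[OF evolution_has_vector_derivative] .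
  then show ?thesis
    by (simp add: matrix_eq matrix_vector_mul_assoc)
qed

lemma T_inverse: "T s r ** T r s = mat 1"
  using T_compose[of s r s] by (simp add: T_self)

lemma continuous_on_T_first: "continuous_on UNIV (\<lambda>t. T t s)"
  using has_vector_derivative_continuous[OF T_deriv] by (simp add: continuous_at_imp_continuous_on)

lemma continuous_on_T_second: "continuous_on UNIV (\<lambda>r. T s r)"
proof (intro continuous_at_imp_continuous_on ballI)
  fix r\<^sub>0
  have "isCont (\<lambda>r. T r r\<^sub>0) r\<^sub>0"
    by (rule has_vector_derivative_continuous[OF T_deriv])
  then have "((\<lambda>r. T r r\<^sub>0) \<longlongrightarrow> mat 1) (at r\<^sub>0)"
    by (simp add: isCont_def T_self)
  then have "((\<lambda>r. T r\<^sub>0 r) \<longlongrightarrow> mat 1) (at r\<^sub>0)"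
    by (rule tendsto_mat_1_left_inverse) (simp add: T_inverse)
  then have "((\<lambda>r. T s r\<^sub>0 ** T r\<^sub>0 r) \<longlongrightarrow> T s r\<^sub>0 ** mat 1) (at r\<^sub>0)"
    by (rule bounded_bilinear.tendsto[OF bounded_bilinear_matrix_matrix_mult tendsto_const])
  then show "isCont (\<lambda>r. T s r) r\<^sub>0"
    by (simp add: T_compose isCont_def)
qed

lemma continuous_on_P: "continuous_on UNIV P"
proof -
  have "T r 0 ** P 0 ** T 0 r = P r" for r
  proof -
    have "T r 0 ** P 0 ** T 0 r = P r ** (T r 0 ** T 0 r)"
      by (simp add: P_commute matrix_mul_assoc)
    then show ?thesis by (simp add: T_inverse)
  qed
  moreover have "continuous_on UNIV (\<lambda>r. T r 0 ** P 0)"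
    by (rule bounded_bilinear.continuous_on[OF bounded_bilinear_matrix_matrix_mult
          continuous_on_T_first continuous_on_const])
  then have "continuous_on UNIV (\<lambda>r. T r 0 ** P 0 ** T 0 r)"
    by (rule bounded_bilinear.continuous_on[OF bounded_bilinear_matrix_matrix_mult _ continuous_on_T_second])
  ultimately show ?thesis by simp
qed

lemma mu_ratio_powr_tendsto_at_bot: "((\<lambda>r. (\<mu> t / \<mu> r) powr (-\<alpha>)) \<longlongrightarrow> 0) at_bot"
proof (rule tendsto_neg_powr)
  have "filterlim \<mu> (at_right 0) at_bot"
    using mu_at_bot mu_pos by (auto simp: filterlim_at intro!: always_eventually) (metis less_irrefl)
  then have "filterlim (\<lambda>r. inverse (\<mu> r)) at_top at_bot"
    using filterlim_compose[OF filterlim_inverse_at_top_right] by blast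
  then have "filterlim (\<lambda>r. \<mu> t * inverse (\<mu> r)) at_top at_bot"
    by (rule filterlim_tendsto_pos_mult_at_top[OF tendsto_const mu_pos])
  then show "filterlim (\<lambda>r. \<mu> t / \<mu> r) at_top at_bot"
    by (simp add: divide_inverse)
qed (use alpha_pos in simp)

lemma mu_ratio_powr_tendsto_at_top: "((\<lambda>r. (\<mu> r / \<mu> t) powr (-\<alpha>)) \<longlongrightarrow> 0) at_top"
proof (rule tendsto_neg_powr)
  have "filterlim (\<lambda>r. inverse (\<mu> t) * \<mu> r) at_top at_top"
    by (rule filterlim_tendsto_pos_mult_at_top[OF tendsto_const _ mu_at_top]) (simp add: mu_pos)
  then show "filterlim (\<lambda>r. \<mu> r / \<mu> t) at_top at_top"
    by (simp add: divide_inverse mult.commute)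
qed (use alpha_pos in simp)

text \<open>The stable part of \<open>x t\<close> is controlled from the far past, the unstable part from the far future.\<close>

lemma bounded_linear_solution_eq_0:
  assumes x: "\<And>s. (x has_vector_derivative A s *v x s) (at s)"
    and bounded: "bounded (range x)"
  shows "x t = 0"
proof -
  obtain B where B: "\<And>s. norm (x s) \<le> B"
    using bounded by (auto simp: bounded_iff)
  have stable_eq: "P t *v x t = (T t r ** P r) *v x r" for r
    using linear_solution_eq_evolution[OF x, of t r] by (simp add: matrix_vector_mul_assoc P_commute)
  have "norm (P t *v x t) \<le> K * (\<mu> t / \<mu> r) powr (-\<alpha>) * B" if "r \<le> t" for r
    unfolding stable_eq[of r] by (rule norm_matrix_vector_mult_le[OF stable_bound[OF that] B])
  moreover have "((\<lambda>r. K * (\<mu> t / \<mu> r) powr (-\<alpha>) * B) \<longlongrightarrow> 0) at_bot"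
    by (intro tendsto_mult_left_zero tendsto_mult_right_zero mu_ratio_powr_tendsto_at_bot)
  ultimately have stable: "P t *v x t = 0"
    by (intro eq_0_if_eventually_norm_le[OF trivial_limit_at_bot_linorder]) (auto simp: eventually_at_bot_linorder)
  have unstable_eq: "(mat 1 - P t) *v x t = (T t r ** (mat 1 - P r)) *v x r" for r
    using linear_solution_eq_evolution[OF x, of t r]
    by (simp add: matrix_vector_mul_assoc P_commute matrix_vector_mult_diff_rdistrib
        bounded_bilinear.diff_left[OF bounded_bilinear_matrix_matrix_mult]
        bounded_bilinear.diff_right[OF bounded_bilinear_matrix_matrix_mult])
  have "norm ((mat 1 - P t) *v x t) \<le> K * (\<mu> r / \<mu> t) powr (-\<alpha>) * B" if "t \<le> r" for r
    unfolding unstable_eq[of r] by (rule norm_matrix_vector_mult_le[OF unstable_bound[OF that] B])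
  moreover have "((\<lambda>r. K * (\<mu> r / \<mu> t) powr (-\<alpha>) * B) \<longlongrightarrow> 0) at_top"
    by (intro tendsto_mult_left_zero tendsto_mult_right_zero mu_ratio_powr_tendsto_at_top)
  ultimately have unstable: "(mat 1 - P t) *v x t = 0"
    by (intro eq_0_if_eventually_norm_le[OF trivial_limit_at_top_linorder]) (auto simp: eventually_at_top_linorder)
  from stable unstable show ?thesis
    by (simp add: matrix_vector_mult_diff_rdistrib)
qed

section \<open>The Green operator\<close>

lemma K_nonneg: "K \<ge> 0"
  using stable_bound[of 0 0] opnorm_nonneg[of "T 0 0 ** P 0"] mu_pos[of 0] by simp

lemma mu_ratio_powr_eq_exp: "(\<mu> s / \<mu> r) powr (-\<alpha>) = exp (\<alpha> * (ln (\<mu> r) - ln (\<mu> s)))"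
  using mu_pos[of r] mu_pos[of s] by (simp add: powr_def ln_div algebra_simps)

lemma stable_weight_integrable:
  shows "(\<lambda>r. (\<mu> s / \<mu> r) powr (-\<alpha>) * (deriv \<mu> r / \<mu> r)) integrable_on {..s}"
    and "integral {..s} (\<lambda>r. (\<mu> s / \<mu> r) powr (-\<alpha>) * (deriv \<mu> r / \<mu> r)) \<le> 1 / \<alpha>"
proof -
  have primitive: "((\<lambda>r. exp (\<alpha> * (ln (\<mu> r) - ln (\<mu> s))) / \<alpha>) has_real_derivative
      (\<mu> s / \<mu> r) powr (-\<alpha>) * (deriv \<mu> r / \<mu> r)) (at r)" for r
    unfolding mu_ratio_powr_eq_exp using alpha_pos
    by (auto intro!: derivative_eq_intros mu_has_derivative simp: mu_pos)
  have nonneg: "0 \<le> (\<mu> s / \<mu> r) powr (-\<alpha>) * (deriv \<mu> r / \<mu> r)" for r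
    using log_derivative_nonneg[of r] by (intro mult_nonneg_nonneg) auto
  have lower: "0 \<le> exp (\<alpha> * (ln (\<mu> r) - ln (\<mu> s))) / \<alpha>" for r
    using alpha_pos by simp
  show "(\<lambda>r. (\<mu> s / \<mu> r) powr (-\<alpha>) * (deriv \<mu> r / \<mu> r)) integrable_on {..s}"
    by (rule nonneg_integrable_on_Iic_bounded_primitive(1)[OF primitive nonneg lower])
  show "integral {..s} (\<lambda>r. (\<mu> s / \<mu> r) powr (-\<alpha>) * (deriv \<mu> r / \<mu> r)) \<le> 1 / \<alpha>"
    using nonneg_integrable_on_Iic_bounded_primitive(2)[where s=s, OF primitive nonneg lower] by simp
qed

lemma unstable_weight_integrable:
  shows "(\<lambda>r. (\<mu> r / \<mu> s) powr (-\<alpha>) * (deriv \<mu> r / \<mu> r)) integrable_on {s..}"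
    and "integral {s..} (\<lambda>r. (\<mu> r / \<mu> s) powr (-\<alpha>) * (deriv \<mu> r / \<mu> r)) \<le> 1 / \<alpha>"
proof -
  have primitive: "((\<lambda>r. - exp (\<alpha> * (ln (\<mu> s) - ln (\<mu> r))) / \<alpha>) has_real_derivative
      (\<mu> r / \<mu> s) powr (-\<alpha>) * (deriv \<mu> r / \<mu> r)) (at r)" for r
    unfolding mu_ratio_powr_eq_exp using alpha_pos
    by (auto intro!: derivative_eq_intros mu_has_derivative simp: mu_pos)
  have nonneg: "0 \<le> (\<mu> r / \<mu> s) powr (-\<alpha>) * (deriv \<mu> r / \<mu> r)" for r
    using log_derivative_nonneg[of r] by (intro mult_nonneg_nonneg) auto
  have upper: "- exp (\<alpha> * (ln (\<mu> s) - ln (\<mu> r))) / \<alpha> \<le> 0" for r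
    using alpha_pos by simp
  show "(\<lambda>r. (\<mu> r / \<mu> s) powr (-\<alpha>) * (deriv \<mu> r / \<mu> r)) integrable_on {s..}"
    by (rule nonneg_integrable_on_Ici_bounded_primitive(1)[OF primitive nonneg upper])
  show "integral {s..} (\<lambda>r. (\<mu> r / \<mu> s) powr (-\<alpha>) * (deriv \<mu> r / \<mu> r)) \<le> 1 / \<alpha>"
    using nonneg_integrable_on_Ici_bounded_primitive(2)[where s=s, OF primitive nonneg upper] by simp
qed

definition green :: "(real \<Rightarrow> real^'n) \<Rightarrow> real \<Rightarrow> real^'n" where
  "green F t = integral {..t} (\<lambda>r. (T t r ** P r) *v F r)
               - integral {t..} (\<lambda>r. (T t r ** (mat 1 - P r)) *v F r)"

context
  fixes F :: "real \<Rightarrow> real^'n" and c :: real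
  assumes F_continuous: "continuous_on UNIV F"
    and F_bound: "\<And>r. norm (F r) \<le> c * (deriv \<mu> r / \<mu> r)"
    and c_nonneg: "c \<ge> 0"
begin

lemma kernel_integral_bound:
  assumes S: "S \<in> sets lebesgue" and M: "continuous_on S M"
    and M_bound: "\<And>r. r \<in> S \<Longrightarrow> opnorm (M r) \<le> K * \<omega> r"
    and \<omega>: "(\<lambda>r. \<omega> r * (deriv \<mu> r / \<mu> r)) integrable_on S"
      "integral S (\<lambda>r. \<omega> r * (deriv \<mu> r / \<mu> r)) \<le> 1 / \<alpha>"
  shows "(\<lambda>r. M r *v F r) integrable_on S" and "norm (integral S (\<lambda>r. M r *v F r)) \<le> K * c / \<alpha>"
proof -
  let ?w = "\<lambda>r. K * c * (\<omega> r * (deriv \<mu> r / \<mu> r))"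
  have "norm (M r *v F r) \<le> ?w r" if "r \<in> S" for r
    using norm_matrix_vector_mult_le[OF M_bound[OF that] F_bound] by (simp add: mult_ac)
  moreover have "continuous_on S (\<lambda>r. M r *v F r)"
    by (intro bounded_bilinear.continuous_on[OF bounded_bilinear_matrix_vector_mult M]
        continuous_on_subset[OF F_continuous] subset_UNIV)
  moreover have "?w integrable_on S"
    using integrable_on_mult_right[OF \<omega>(1)] .
  moreover have "integral S ?w \<le> K * c / \<alpha>"
  proof -
    have "integral S ?w = K * c * integral S (\<lambda>r. \<omega> r * (deriv \<mu> r / \<mu> r))"
      by (rule integral_mult_right)
    also have "\<dots> \<le> K * c * (1 / \<alpha>)"
      using K_nonneg c_nonneg \<omega>(2) by (intro mult_left_mono) auto
    finally show ?thesis by simp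
  qed
  ultimately show "(\<lambda>r. M r *v F r) integrable_on S"
    and "norm (integral S (\<lambda>r. M r *v F r)) \<le> K * c / \<alpha>"
    using continuous_dominated_integrable[OF _ S] by force+
qed

lemma stable_integral:
  shows "(\<lambda>r. (T t r ** P r) *v F r) integrable_on {..t}"
    and "norm (integral {..t} (\<lambda>r. (T t r ** P r) *v F r)) \<le> K * c / \<alpha>"
proof -
  have "continuous_on {..t} (\<lambda>r. T t r ** P r)"
    by (intro bounded_bilinear.continuous_on[OF bounded_bilinear_matrix_matrix_mult]
        continuous_on_subset[OF continuous_on_T_second] continuous_on_subset[OF continuous_on_P] subset_UNIV)
  moreover have "opnorm (T t r ** P r) \<le> K * (\<mu> t / \<mu> r) powr (-\<alpha>)" if "r \<in> {..t}" for r
    using that stable_bound by simp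
  ultimately show "(\<lambda>r. (T t r ** P r) *v F r) integrable_on {..t}"
    and "norm (integral {..t} (\<lambda>r. (T t r ** P r) *v F r)) \<le> K * c / \<alpha>"
    using kernel_integral_bound[where M="\<lambda>r. T t r ** P r", OF _ _ _ stable_weight_integrable] by auto
qed

lemma unstable_integral:
  shows "(\<lambda>r. (T t r ** (mat 1 - P r)) *v F r) integrable_on {t..}"
    and "norm (integral {t..} (\<lambda>r. (T t r ** (mat 1 - P r)) *v F r)) \<le> K * c / \<alpha>"
proof -
  have "continuous_on {t..} (\<lambda>r. T t r ** (mat 1 - P r))"
    by (intro bounded_bilinear.continuous_on[OF bounded_bilinear_matrix_matrix_mult]
        continuous_on_subset[OF continuous_on_T_second] continuous_on_diff continuous_on_const
        continuous_on_subset[OF continuous_on_P] subset_UNIV)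
  moreover have "opnorm (T t r ** (mat 1 - P r)) \<le> K * (\<mu> r / \<mu> t) powr (-\<alpha>)" if "r \<in> {t..}" for r
    using that unstable_bound by simp
  ultimately show "(\<lambda>r. (T t r ** (mat 1 - P r)) *v F r) integrable_on {t..}"
    and "norm (integral {t..} (\<lambda>r. (T t r ** (mat 1 - P r)) *v F r)) \<le> K * c / \<alpha>"
    using kernel_integral_bound[where M="\<lambda>r. T t r ** (mat 1 - P r)", OF _ _ _ unstable_weight_integrable]
    by auto
qed

lemma green_norm_le: "norm (green F t) \<le> 2 * K * c / \<alpha>"
proof -
  have "norm (green F t) \<le> norm (integral {..t} (\<lambda>r. (T t r ** P r) *v F r))
      + norm (integral {t..} (\<lambda>r. (T t r ** (mat 1 - P r)) *v F r))"
    unfolding green_def by (rule norm_triangle_ineq4)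
  also have "\<dots> \<le> K * c / \<alpha> + K * c / \<alpha>"
    using stable_integral(2) unstable_integral(2) by (rule add_mono)
  finally show ?thesis by simp
qed

lemma bounded_green: "bounded (range (green F))"
  using green_norm_le by (auto simp: bounded_iff)

text \<open>Pulling \<open>T t 0\<close> out of both integrals leaves integrands independent of \<open>t\<close>, so the derivative
  of \<open>green F\<close> comes from the product rule and the fundamental theorem of calculus.\<close>

lemma green_has_vector_derivative: "(green F has_vector_derivative A t *v green F t + F t) (at t)"
proof -
  define p q where "p r = (T 0 r ** P r) *v F r" and "q r = (T 0 r ** (mat 1 - P r)) *v F r" for r
  have kernel_eq: "(T s r ** P r) *v F r = T s 0 *v p r" "(T s r ** (mat 1 - P r)) *v F r = T s 0 *v q r" for s r
    unfolding p_def q_def by (simp_all add: matrix_vector_mul_assoc matrix_mul_assoc T_compose)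
  have p_integrable: "p integrable_on {..s}" for s
  proof -
    have "p = (*v) (T 0 s) \<circ> (\<lambda>r. (T s r ** P r) *v F r)"
      by (auto simp: kernel_eq matrix_vector_mul_assoc T_inverse)
    then show ?thesis
      using integrable_linear[OF stable_integral(1) matrix_vector_mul_bounded_linear] by simp
  qed
  have q_integrable: "q integrable_on {s..}" for s
  proof -
    have "q = (*v) (T 0 s) \<circ> (\<lambda>r. (T s r ** (mat 1 - P r)) *v F r)"
      by (auto simp: kernel_eq matrix_vector_mul_assoc T_inverse)
    then show ?thesis
      using integrable_linear[OF unstable_integral(1) matrix_vector_mul_bounded_linear] by simp
  qed
  have green_eq: "green F s = T s 0 *v (integral {..s} p - integral {s..} q)" for s
    unfolding green_def kernel_eq
    using integral_linear[OF p_integrable matrix_vector_mul_bounded_linear, of s "T s 0"]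
      integral_linear[OF q_integrable matrix_vector_mul_bounded_linear, of s "T s 0"]
    by (simp add: o_def matrix_vector_mult_diff_distrib)
  have continuous: "continuous_on UNIV p" "continuous_on UNIV q"
    unfolding p_def q_def
    by (intro bounded_bilinear.continuous_on[OF bounded_bilinear_matrix_vector_mult]
        bounded_bilinear.continuous_on[OF bounded_bilinear_matrix_matrix_mult] continuous_on_diff
        continuous_on_T_second continuous_on_P continuous_on_const F_continuous)+
  have "((\<lambda>s. integral {..s} p - integral {s..} q) has_vector_derivative p t - - q t) (at t)"
    by (intro has_vector_derivative_diff integral_Iic_has_vector_derivative
        integral_Ici_has_vector_derivative continuous p_integrable q_integrable)
  then have "((\<lambda>s. T s 0 *v (integral {..s} p - integral {s..} q)) has_vector_derivative
      T t 0 *v (p t + q t) + (A t ** T t 0) *v (integral {..t} p - integral {t..} q)) (at t)"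
    using bounded_bilinear.has_vector_derivative[OF bounded_bilinear_matrix_vector_mult T_deriv[where t=t and s=0]]
    by simp
  moreover have "T t 0 *v (p t + q t) = F t"
  proof -
    have "T 0 t ** P t + T 0 t ** (mat 1 - P t) = T 0 t"
      by (simp add: matrix_add_ldistrib[symmetric])
    then have "p t + q t = T 0 t *v F t"
      unfolding p_def q_def by (metis matrix_vector_mult_add_rdistrib)
    then show ?thesis
      by (simp add: matrix_vector_mul_assoc T_inverse)
  qed
  moreover have "green F = (\<lambda>s. T s 0 *v (integral {..s} p - integral {s..} q))"
    using green_eq by blast
  ultimately show ?thesis
    by (simp add: matrix_vector_mul_assoc add.commute)
qed

lemma continuous_on_green: "continuous_on UNIV (green F)"
  using has_vector_derivative_continuous[OF green_has_vector_derivative]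
  by (simp add: continuous_at_imp_continuous_on)

end

lemma bounded_solution_eq_green:
  assumes F: "continuous_on UNIV F" "\<And>r. norm (F r) \<le> c * (deriv \<mu> r / \<mu> r)" "c \<ge> 0"
    and z: "bounded (range z)" "\<And>s. (z has_vector_derivative A s *v z s + F s) (at s)"
  shows "z t = green F t"
proof -
  have "(\<lambda>s. z s - green F s) t = 0"
  proof (rule bounded_linear_solution_eq_0)
    show "((\<lambda>s. z s - green F s) has_vector_derivative A s *v (z s - green F s)) (at s)" for s
      using has_vector_derivative_diff[OF z(2) green_has_vector_derivative[OF F]]
      by (simp add: matrix_vector_mult_diff_distrib)
    show "bounded (range (\<lambda>s. z s - green F s))"
      by (rule bounded_minus_comp[OF z(1) bounded_green[OF F]])
  qed
  then show ?thesis by simp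
qed

end

section \<open>The perturbed system\<close>

locale perturbed_dichotomy = algebraic_dichotomy A T \<mu> P K \<alpha>
  for A :: "real \<Rightarrow> real^'n^'n" and T \<mu> P K \<alpha> +
  fixes f :: "real \<Rightarrow> real^'n \<Rightarrow> real^'n"
    and \<beta> \<gamma> :: real
  assumes f_continuous: "continuous_on UNIV (\<lambda>(t, x). f t x)"
    and f_bound: "\<And>t x. norm (f t x) \<le> \<beta> * deriv \<mu> t / \<mu> t"
    and f_Lipschitz: "\<And>t x y. norm (f t x - f t y) \<le> \<gamma> * deriv \<mu> t / \<mu> t * norm (x - y)"
    and beta_nonneg: "\<beta> \<ge> 0"
    and gamma_nonneg: "\<gamma> \<ge> 0"
    and contraction: "2 * K * \<gamma> < \<alpha>"
begin

lemma perturbed_solutions_eq: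
  assumes u: "\<And>s. (u has_vector_derivative A s *v u s + f s (u s)) (at s)"
    and v: "\<And>s. (v has_vector_derivative A s *v v s + f s (v s)) (at s)"
    and initial: "u t\<^sub>0 = v t\<^sub>0"
  shows "u s = v s"
proof -
  obtain M where M: "\<And>t x. norm (A t *v x) \<le> M * norm x"
    using A_bound by blast
  show ?thesis
  proof (rule Gronwall_uniqueness[where u=u and v=v and t\<^sub>0=t\<^sub>0 and u'="\<lambda>s. A s *v u s + f s (u s)"
        and v'="\<lambda>s. A s *v v s + f s (v s)" and \<Lambda>="\<lambda>s. M * s + \<gamma> * ln (\<mu> s)"
        and L="\<lambda>s. M + \<gamma> * (deriv \<mu> s / \<mu> s)"])
    show "((\<lambda>s. M * s + \<gamma> * ln (\<mu> s)) has_real_derivative M + \<gamma> * (deriv \<mu> s / \<mu> s)) (at s)" for s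
      by (auto intro!: derivative_eq_intros mu_has_derivative simp: mu_pos)
    show "norm (A s *v u s + f s (u s) - (A s *v v s + f s (v s)))
        \<le> (M + \<gamma> * (deriv \<mu> s / \<mu> s)) * norm (u s - v s)" for s
    proof -
      have "norm (A s *v u s + f s (u s) - (A s *v v s + f s (v s)))
          \<le> norm (A s *v (u s - v s)) + norm (f s (u s) - f s (v s))"
        by (rule order_trans[OF _ norm_triangle_ineq]) (simp add: matrix_vector_mult_diff_distrib algebra_simps)
      also have "\<dots> \<le> M * norm (u s - v s) + \<gamma> * deriv \<mu> s / \<mu> s * norm (u s - v s)"
        by (intro add_mono M f_Lipschitz)
      finally show ?thesis by (simp add: algebra_simps)
    qed
  qed (use u v initial in auto)
qed

context
  fixes y :: "real \<Rightarrow> real^'n"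
  assumes y_continuous: "continuous_on UNIV y"
begin

definition perturbation :: "(real \<Rightarrow> real^'n) \<Rightarrow> real \<Rightarrow> real^'n" where
  "perturbation w s = f s (y s + w s)"

lemma continuous_on_perturbation:
  assumes "continuous_on UNIV w"
  shows "continuous_on UNIV (perturbation w)"
proof -
  have "continuous_on UNIV ((\<lambda>(t, x). f t x) \<circ> (\<lambda>s. (s, y s + w s)))"
    by (intro continuous_on_compose continuous_on_Pair continuous_on_id continuous_on_add y_continuous assms
        continuous_on_subset[OF f_continuous] subset_UNIV)
  then show ?thesis by (simp add: perturbation_def o_def)
qed

lemma perturbation_bound: "norm (perturbation w s) \<le> \<beta> * (deriv \<mu> s / \<mu> s)"
  using f_bound by (simp add: perturbation_def)

lemma perturbation_diff_bound:
  assumes "\<And>s. norm (w\<^sub>1 s - w\<^sub>2 s) \<le> D"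
  shows "norm (perturbation w\<^sub>1 s - perturbation w\<^sub>2 s) \<le> (\<gamma> * D) * (deriv \<mu> s / \<mu> s)"
proof -
  have "norm (perturbation w\<^sub>1 s - perturbation w\<^sub>2 s) \<le> \<gamma> * deriv \<mu> s / \<mu> s * norm (w\<^sub>1 s - w\<^sub>2 s)"
    using f_Lipschitz[of s "y s + w\<^sub>1 s" "y s + w\<^sub>2 s"] by (simp add: perturbation_def)
  also have "\<dots> \<le> \<gamma> * deriv \<mu> s / \<mu> s * D"
    using assms[of s] mult_nonneg_nonneg[OF gamma_nonneg log_derivative_nonneg[of s]]
    by (intro mult_left_mono) auto
  finally show ?thesis by (simp add: mult_ac)
qed

text \<open>Bounded solutions of \<open>z' = A z + f (t, y + z)\<close> are the fixed points of this map, a contraction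
  with constant \<open>2 K \<gamma> / \<alpha>\<close> on bounded continuous functions.\<close>

definition lyapunov_perron :: "(real \<Rightarrow>\<^sub>C (real^'n)) \<Rightarrow> (real \<Rightarrow>\<^sub>C (real^'n))" where
  "lyapunov_perron w = Bcontfun (green (perturbation (apply_bcontfun w)))"

lemma apply_lyapunov_perron: "apply_bcontfun (lyapunov_perron w) = green (perturbation (apply_bcontfun w))"
proof -
  have "green (perturbation (apply_bcontfun w)) \<in> bcontfun"
    using continuous_on_green[OF continuous_on_perturbation perturbation_bound beta_nonneg]
      bounded_green[OF continuous_on_perturbation perturbation_bound beta_nonneg]
    by (simp add: bcontfun_def)
  then show ?thesis
    by (simp add: lyapunov_perron_def Bcontfun_inverse)
qed

lemma dist_lyapunov_perron_le:
  "dist (lyapunov_perron w\<^sub>1) (lyapunov_perron w\<^sub>2) \<le> (2 * K * \<gamma> / \<alpha>) * dist w\<^sub>1 w\<^sub>2"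
proof (rule dist_bound)
  fix t
  let ?F\<^sub>1 = "perturbation (apply_bcontfun w\<^sub>1)" and ?F\<^sub>2 = "perturbation (apply_bcontfun w\<^sub>2)"
  have F: "continuous_on UNIV ?F\<^sub>1" "continuous_on UNIV ?F\<^sub>2"
    by (auto intro!: continuous_on_perturbation)
  have "green ?F\<^sub>1 t - green ?F\<^sub>2 t = green (\<lambda>s. ?F\<^sub>1 s - ?F\<^sub>2 s) t"
  proof (rule bounded_solution_eq_green[where z="\<lambda>s. green ?F\<^sub>1 s - green ?F\<^sub>2 s"])
    show "continuous_on UNIV (\<lambda>s. ?F\<^sub>1 s - ?F\<^sub>2 s)"
      using F by (rule continuous_on_diff)
    show "norm (?F\<^sub>1 s - ?F\<^sub>2 s) \<le> (\<beta> + \<beta>) * (deriv \<mu> s / \<mu> s)" for s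
    proof -
      have "norm (?F\<^sub>1 s - ?F\<^sub>2 s) \<le> norm (?F\<^sub>1 s) + norm (?F\<^sub>2 s)"
        by (rule norm_triangle_ineq4)
      also have "\<dots> \<le> (\<beta> + \<beta>) * (deriv \<mu> s / \<mu> s)"
        unfolding distrib_right by (intro add_mono perturbation_bound)
      finally show ?thesis .
    qed
    show "bounded (range (\<lambda>s. green ?F\<^sub>1 s - green ?F\<^sub>2 s))"
      by (intro bounded_minus_comp bounded_green[OF _ perturbation_bound beta_nonneg] F)
    show "((\<lambda>s. green ?F\<^sub>1 s - green ?F\<^sub>2 s) has_vector_derivative
        A s *v (green ?F\<^sub>1 s - green ?F\<^sub>2 s) + (?F\<^sub>1 s - ?F\<^sub>2 s)) (at s)" for s
      using has_vector_derivative_diff[OF green_has_vector_derivative[OF F(1) perturbation_bound beta_nonneg]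
          green_has_vector_derivative[OF F(2) perturbation_bound beta_nonneg]]
      by (simp add: matrix_vector_mult_diff_distrib algebra_simps)
  qed (use beta_nonneg in simp)
  also have "norm \<dots> \<le> 2 * K * (\<gamma> * dist w\<^sub>1 w\<^sub>2) / \<alpha>"
  proof (rule green_norm_le)
    show "continuous_on UNIV (\<lambda>s. ?F\<^sub>1 s - ?F\<^sub>2 s)"
      using F by (rule continuous_on_diff)
    show "norm (?F\<^sub>1 s - ?F\<^sub>2 s) \<le> (\<gamma> * dist w\<^sub>1 w\<^sub>2) * (deriv \<mu> s / \<mu> s)" for s
      by (rule perturbation_diff_bound) (metis dist_bounded dist_norm)
  qed (use gamma_nonneg in simp)
  finally show "dist (apply_bcontfun (lyapunov_perron w\<^sub>1) t) (apply_bcontfun (lyapunov_perron w\<^sub>2) t)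
      \<le> (2 * K * \<gamma> / \<alpha>) * dist w\<^sub>1 w\<^sub>2"
    by (simp add: apply_lyapunov_perron dist_norm)
qed

lemma ex1_bounded_perturbed_solution:
  "\<exists>!z. bounded (range z) \<and> (\<forall>s. (z has_vector_derivative A s *v z s + f s (y s + z s)) (at s))"
proof -
  have "0 \<le> 2 * K * \<gamma> / \<alpha>" "2 * K * \<gamma> / \<alpha> < 1"
    using K_nonneg gamma_nonneg alpha_pos contraction by auto
  then have "\<exists>!w. lyapunov_perron w = w"
    using dist_lyapunov_perron_le by (intro banach_fix_type) auto
  then obtain w where w: "lyapunov_perron w = w" and unique: "\<And>w'. lyapunov_perron w' = w' \<Longrightarrow> w' = w"
    by blast
  have w_eq: "apply_bcontfun w = green (perturbation (apply_bcontfun w))"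
    using arg_cong[OF w, of apply_bcontfun] by (simp add: apply_lyapunov_perron)
  show ?thesis
  proof (rule ex1I[where a="apply_bcontfun w"], intro conjI allI)
    show "bounded (range (apply_bcontfun w))"
      using apply_bcontfun[of w] by (simp add: bcontfun_def)
    fix s
    have "(apply_bcontfun w has_vector_derivative
        A s *v apply_bcontfun w s + perturbation (apply_bcontfun w) s) (at s)"
      using green_has_vector_derivative[OF continuous_on_perturbation[OF continuous_on_apply_bcontfun[of UNIV w]]
          perturbation_bound beta_nonneg]
      by (simp only: w_eq[symmetric])
    then show "(apply_bcontfun w has_vector_derivative
        A s *v apply_bcontfun w s + f s (y s + apply_bcontfun w s)) (at s)"
      by (simp add: perturbation_def)
  next
    fix z
    assume z: "bounded (range z) \<and> (\<forall>s. (z has_vector_derivative A s *v z s + f s (y s + z s)) (at s))"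
    then have z_continuous: "continuous_on UNIV z"
      by (intro continuous_at_imp_continuous_on ballI has_vector_derivative_continuous) blast
    then have "z \<in> bcontfun"
      using z by (simp add: bcontfun_def)
    moreover have "z t = green (perturbation z) t" for t
      using z by (intro bounded_solution_eq_green[OF continuous_on_perturbation[OF z_continuous]
          perturbation_bound beta_nonneg]) (auto simp: perturbation_def)
    then have "green (perturbation z) = z"
      by auto
    ultimately have "lyapunov_perron (Bcontfun z) = Bcontfun z"
      by (simp add: lyapunov_perron_def Bcontfun_inverse)
    then show "z = apply_bcontfun w"
      using unique \<open>z \<in> bcontfun\<close> by (metis Bcontfun_inverse)
  qed
qed

end

lemma gsol_bounded_solution:
  assumes "continuous_on UNIV (\<lambda>s. Y s \<tau> \<xi>)"
  shows "bounded (range (\<lambda>s. gsol A f Y s (\<tau>, \<xi>)))"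
    and "\<And>s. ((\<lambda>s. gsol A f Y s (\<tau>, \<xi>)) has_vector_derivative
            A s *v gsol A f Y s (\<tau>, \<xi>) + f s (Y s \<tau> \<xi> + gsol A f Y s (\<tau>, \<xi>))) (at s)"
proof -
  define g where "g = (THE z. bounded (range z) \<and>
    (\<forall>s. (z has_vector_derivative A s *v z s + f s (Y s \<tau> \<xi> + z s)) (at s)))"
  have "bounded (range g) \<and> (\<forall>s. (g has_vector_derivative A s *v g s + f s (Y s \<tau> \<xi> + g s)) (at s))"
    unfolding g_def by (rule theI'[OF ex1_bounded_perturbed_solution[OF assms]])
  moreover have "gsol A f Y s (\<tau>, \<xi>) = g s" for s
    by (simp add: gsol_def g_def)
  ultimately show "bounded (range (\<lambda>s. gsol A f Y s (\<tau>, \<xi>)))"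
    and "\<And>s. ((\<lambda>s. gsol A f Y s (\<tau>, \<xi>)) has_vector_derivative
            A s *v gsol A f Y s (\<tau>, \<xi>) + f s (Y s \<tau> \<xi> + gsol A f Y s (\<tau>, \<xi>))) (at s)"
    by simp_all
qed

lemma hsol_eqI:
  assumes h: "bounded (range h)" "\<And>s. (h has_vector_derivative A s *v h s - f s (X s \<tau> \<xi>)) (at s)"
  shows "hsol A f X t (\<tau>, \<xi>) = h t"
proof -
  have "(THE h. bounded (range h) \<and> (\<forall>s. (h has_vector_derivative A s *v h s - f s (X s \<tau> \<xi>)) (at s))) = h"
  proof (rule the_equality)
    fix h'
    assume h': "bounded (range h') \<and> (\<forall>s. (h' has_vector_derivative A s *v h' s - f s (X s \<tau> \<xi>)) (at s))"
    have "h' s - h s = 0" for s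
    proof (rule bounded_linear_solution_eq_0[where x="\<lambda>s. h' s - h s"])
      show "((\<lambda>s. h' s - h s) has_vector_derivative A s *v (h' s - h s)) (at s)" for s
        using has_vector_derivative_diff[OF h'[THEN conjunct2, rule_format, of s] h(2)[of s]]
        by (simp add: matrix_vector_mult_diff_distrib)
      show "bounded (range (\<lambda>s. h' s - h s))"
        using h' h(1) by (intro bounded_minus_comp) auto
    qed
    then show "h' = h" by auto
  qed (use h in auto)
  then show ?thesis
    unfolding hsol_def by simp
qed

lemma Hmap_Gmap:
  assumes X_init: "\<And>\<tau> \<xi>. X \<tau> \<tau> \<xi> = \<xi>"
    and X_sol: "\<And>t \<tau> \<xi>. ((\<lambda>r. X r \<tau> \<xi>) has_vector_derivative (A t *v X t \<tau> \<xi> + f t (X t \<tau> \<xi>))) (at t)"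
    and Y_init: "\<And>\<tau> \<xi>. Y \<tau> \<tau> \<xi> = \<xi>"
    and Y_sol: "\<And>t \<tau> \<xi>. ((\<lambda>r. Y r \<tau> \<xi>) has_vector_derivative (A t *v Y t \<tau> \<xi>)) (at t)"
  shows "Hmap A f X t (Gmap A f Y t y) = y"
proof -
  define g where "g s = gsol A f Y s (t, y)" for s
  define x where "x = y + g t"
  have Y_continuous: "continuous_on UNIV (\<lambda>s. Y s t y)"
    using has_vector_derivative_continuous[OF Y_sol] by (simp add: continuous_at_imp_continuous_on)
  note g = gsol_bounded_solution[where Y=Y and \<tau>=t and \<xi>=y, OF Y_continuous, folded g_def]
  have X_eq: "X s t x = Y s t y + g s" for s
  proof (rule perturbed_solutions_eq[where t\<^sub>0=t])
    show "((\<lambda>s. Y s t y + g s) has_vector_derivative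
        A s *v (Y s t y + g s) + f s (Y s t y + g s)) (at s)" for s
      using has_vector_derivative_add[OF Y_sol g(2)] by (simp add: matrix_vector_right_distrib add.assoc)
  qed (auto simp: X_sol X_init Y_init x_def)
  have "hsol A f X t (t, x) = - g t"
  proof (rule hsol_eqI)
    show "bounded (range (\<lambda>s. - g s))"
      using g(1) by simp
    show "((\<lambda>s. - g s) has_vector_derivative A s *v - g s - f s (X s t x)) (at s)" for s
      using has_vector_derivative_minus[OF g(2)[of s]]
      by (simp add: X_eq linear_neg[OF matrix_vector_mul_linear])
  qed
  then show ?thesis
    by (simp add: Hmap_def Gmap_def g_def x_def)
qed

end

theorem lemma3p7:
  fixes A :: "real \<Rightarrow> real^'n^'n"
    and T :: "real \<Rightarrow> real \<Rightarrow> real^'n^'n"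
    and \<mu> :: "real \<Rightarrow> real"
    and P :: "real \<Rightarrow> real^'n^'n"
    and K \<alpha> \<beta> \<gamma> :: real
    and f :: "real \<Rightarrow> real^'n \<Rightarrow> real^'n"
    and X Y :: "real \<Rightarrow> real \<Rightarrow> real^'n \<Rightarrow> real^'n"
  assumes A_cont: "continuous_on UNIV A"
    and A_bdd: "bounded (range A)"
    and T_init: "\<And>s. T s s = mat 1"
    and T_deriv: "\<And>t s. ((\<lambda>r. T r s) has_vector_derivative (A t ** T t s)) (at t)"
    and mu_pos: "\<And>t. \<mu> t > 0"
    and mu_incr: "strict_mono \<mu>"
    and mu_diff: "\<And>t. \<mu> differentiable (at t)"
    and mu_0: "\<mu> 0 = 1"
    and mu_bot: "(\<mu> \<longlongrightarrow> 0) at_bot"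
    and mu_top: "filterlim \<mu> at_top at_top"
    and P_proj: "\<And>s. P s ** P s = P s"
    and K_pos: "K > 0" and alpha_pos: "\<alpha> > 0"
    and dich_comm: "\<And>t s. T t s ** P s = P t ** T t s"
    and dich_P: "\<And>t s. t \<ge> s \<Longrightarrow> opnorm (T t s ** P s) \<le> K * (\<mu> t / \<mu> s) powr (-\<alpha>)"
    and dich_Q: "\<And>t s. t \<le> s \<Longrightarrow> opnorm (T t s ** (mat 1 - P s)) \<le> K * (\<mu> s / \<mu> t) powr (-\<alpha>)"
    and f_cont: "continuous_on UNIV (\<lambda>(t, x). f t x)"
    and f_bdd: "\<And>t x. norm (f t x) \<le> \<beta> * deriv \<mu> t / \<mu> t"
    and f_lip: "\<And>t x1 x2. norm (f t x1 - f t x2) \<le> \<gamma> * deriv \<mu> t / \<mu> t * norm (x1 - x2)"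
    and beta_nn: "\<beta> \<ge> 0" and gamma_nn: "\<gamma> \<ge> 0"
    and small: "6 * K * \<gamma> / \<alpha> < 1"
    and X_init: "\<And>\<tau> \<xi>. X \<tau> \<tau> \<xi> = \<xi>"
    and X_sol: "\<And>t \<tau> \<xi>. ((\<lambda>r. X r \<tau> \<xi>) has_vector_derivative
                    (A t *v X t \<tau> \<xi> + f t (X t \<tau> \<xi>))) (at t)"
    and Y_init: "\<And>\<tau> \<xi>. Y \<tau> \<tau> \<xi> = \<xi>"
    and Y_sol: "\<And>t \<tau> \<xi>. ((\<lambda>r. Y r \<tau> \<xi>) has_vector_derivative (A t *v Y t \<tau> \<xi>)) (at t)"
  shows "\<forall>t y. Hmap A f X t (Gmap A f Y t y) = y"
proof -
  have contraction: "2 * K * \<gamma> < \<alpha>"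
    using small K_pos gamma_nn alpha_pos by (simp add: field_simps)
  interpret perturbed_dichotomy A T \<mu> P K \<alpha> f \<beta> \<gamma>
    by unfold_locales (fact assms strict_mono_mono[OF mu_incr] contraction)+
  show ?thesis
    using Hmap_Gmap[OF X_init X_sol Y_init Y_sol] by blast
qed

end
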